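(* Let $G$ be a topological group with identity $e$, equipped with its left uniformity. If $U\subseteq G\times G$ belongs to the left uniformity and is an equivalence relation on $G$, then $A=\bigcap_{g\in G} g\,U[g^{-1}]$ is an open subgroup of $G$ with $A_L\subseteq U$. Consequently the sets $A_L$, $A$ ranging over the open subgroups of $G$, form a base for the uniformity $\mathcal U_{eq}$ associated to the left uniformity, and the following are equivalent: (i) $G$ is uniformly $0$-dimensional with respect to the left uniformity; (ii) $G$ is strongly $0$-dimensional at $e$ with respect to the left uniformity; (iii) $G$ is strongly $0$-dimensional with respect to the left uniformity; (iv) the open subgroups of $G$ form a local base for the topology of $G$ at $e$. The same holds with the right uniformity and $A_R$.
   Context: A topological group is a group with a topology making multiplication $G\times G\to G$ and inversion continuous. For $A\subseteq G$: $A_L=\{(x,y): x^{-1}y\in A\}$, $A_R=\{(x,y): yx^{-1}\in A\}$; for $U\subseteq G\times G$, $U[x]=\{y:(x,y)\in U\}$. The left (resp. right) uniformity of $G$ is the uniformity having base $\{W_L: W \text{ open}, e\in W\}$ (resp. $\{W_R\}$); a uniformity on $X$ is a nonempty collection of subsets of $X\times X$ containing the diagonal, closed under transposition, finite intersections and supersets, and such that each member contains $V*V=\{(x,z):\exists y,(x,y),(y,z)\in V\}$ for some member $V$. $\mathcal U_{eq}$ is the uniformity with base the members of the given uniformity that are equivalence relations. $A,B$ are uniformly separated if some member $U$ contains no $(x,y)$ with $x\in A$, $y\in B$. Uniformly $0$-dimensional: the uniformity has a base of equivalence relations. Strongly $0$-dimensional at $x$: for each open $W\ni x$ there is $V\subseteq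 W$ with $x\in V$ and $V$ uniformly separated from its complement; strongly $0$-dimensional: this holds at every point. *)

theory Defs
  imports "HOL-Analysis.Analysis" "HOL-Algebra.Coset"
begin

definition topological_group :: "('a, 'b) monoid_scheme \<Rightarrow> 'a topology \<Rightarrow> bool" where
  "topological_group G T \<longleftrightarrow> group G \<and> topspace T = carrier G
     \<and> continuous_map (prod_topology T T) T (\<lambda>(x, y). x \<otimes>\<^bsub>G\<^esub> y)
     \<and> continuous_map T T (\<lambda>x. inv\<^bsub>G\<^esub> x)"

definition left_ent :: "('a, 'b) monoid_scheme \<Rightarrow> 'a set \<Rightarrow> ('a \<times> 'a) set" where
  "left_ent G A = {(x, y). x \<in> carrier G \<and> y \<in> carrier G \<and> inv\<^bsub>G\<^esub> x \<otimes>\<^bsub>G\<^esub> y \<in> A}"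

definition right_ent :: "('a, 'b) monoid_scheme \<Rightarrow> 'a set \<Rightarrow> ('a \<times> 'a) set" where
  "right_ent G A = {(x, y). x \<in> carrier G \<and> y \<in> carrier G \<and> y \<otimes>\<^bsub>G\<^esub> inv\<^bsub>G\<^esub> x \<in> A}"

definition uniformity_generated :: "'a set \<Rightarrow> ('a \<times> 'a) set set \<Rightarrow> ('a \<times> 'a) set set" where
  "uniformity_generated X B = {U. U \<subseteq> X \<times> X \<and> (\<exists>V\<in>B. V \<subseteq> U)}"

definition left_uniformity :: "('a, 'b) monoid_scheme \<Rightarrow> 'a topology \<Rightarrow> ('a \<times> 'a) set set" where
  "left_uniformity G T =
     uniformity_generated (carrier G) {left_ent G W | W. openin T W \<and> \<one>\<^bsub>G\<^esub> \<in> W}"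

definition right_uniformity :: "('a, 'b) monoid_scheme \<Rightarrow> 'a topology \<Rightarrow> ('a \<times> 'a) set set" where
  "right_uniformity G T =
     uniformity_generated (carrier G) {right_ent G W | W. openin T W \<and> \<one>\<^bsub>G\<^esub> \<in> W}"

definition eq_uniformity :: "'a set \<Rightarrow> ('a \<times> 'a) set set \<Rightarrow> ('a \<times> 'a) set set" where
  "eq_uniformity X \<U> = uniformity_generated X {U \<in> \<U>. equiv X U}"

definition is_uniformity_base :: "('a \<times> 'a) set set \<Rightarrow> ('a \<times> 'a) set set \<Rightarrow> bool" where
  "is_uniformity_base B \<U> \<longleftrightarrow> B \<subseteq> \<U> \<and> (\<forall>U\<in>\<U>. \<exists>V\<in>B. V \<subseteq> U)"

definition uniformly_separated :: "('a \<times> 'a) set set \<Rightarrow> 'a set \<Rightarrow> 'a set \<Rightarrow> bool" where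
  "uniformly_separated \<U> A B \<longleftrightarrow> (\<exists>U\<in>\<U>. \<forall>x\<in>A. \<forall>y\<in>B. (x, y) \<notin> U)"

definition uniformly_zero_dim :: "'a set \<Rightarrow> ('a \<times> 'a) set set \<Rightarrow> bool" where
  "uniformly_zero_dim X \<U> \<longleftrightarrow> is_uniformity_base {U \<in> \<U>. equiv X U} \<U>"

definition strongly_zero_dim_at :: "'a topology \<Rightarrow> ('a \<times> 'a) set set \<Rightarrow> 'a \<Rightarrow> bool" where
  "strongly_zero_dim_at T \<U> x \<longleftrightarrow>
     (\<forall>W. openin T W \<and> x \<in> W \<longrightarrow>
        (\<exists>V. V \<subseteq> W \<and> x \<in> V \<and> uniformly_separated \<U> V (topspace T - V)))"

definition strongly_zero_dim :: "'a topology \<Rightarrow> ('a \<times> 'a) set set \<Rightarrow> bool" where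
  "strongly_zero_dim T \<U> \<longleftrightarrow> (\<forall>x\<in>topspace T. strongly_zero_dim_at T \<U> x)"

definition open_subgroups :: "('a, 'b) monoid_scheme \<Rightarrow> 'a topology \<Rightarrow> 'a set set" where
  "open_subgroups G T = {A. subgroup A G \<and> openin T A}"

definition open_subgroups_local_base :: "('a, 'b) monoid_scheme \<Rightarrow> 'a topology \<Rightarrow> bool" where
  "open_subgroups_local_base G T \<longleftrightarrow>
     (\<forall>W. openin T W \<and> \<one>\<^bsub>G\<^esub> \<in> W \<longrightarrow> (\<exists>A\<in>open_subgroups G T. A \<subseteq> W))"

end

theory Submission
  imports Defs
begin

text \<open>For an equivalence relation U in the left uniformity, the intersection in the theorem is
the set of all a with (x, x a) \<in> U for every x. Transitivity of U makes it a subgroup, and since U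
contains some W_L with W an open neighbourhood of e, it is closed under right multiplication by W,
hence open. Every characterisation of zero-dimensionality then reduces to finding, inside a given
entourage or neighbourhood, an equivalence relation of the left uniformity: for a set V uniformly
separated from its complement, the partition {V, G - V} is one. The right-handed statements are
the left-handed ones for the opposite group.\<close>

lemma topological_group_group: "topological_group G T \<Longrightarrow> group G"
  by (simp add: topological_group_def)

lemma topological_group_topspace: "topological_group G T \<Longrightarrow> topspace T = carrier G"
  by (simp add: topological_group_def)

lemma topological_group_openin_subset:
  "topological_group G T \<Longrightarrow> openin T W \<Longrightarrow> W \<subseteq> carrier G"
  using openin_subset topological_group_topspace by metis

lemma continuous_map_left_translation:
  assumes tg: "topological_group G T" and c: "c \<in> carrier G"
  shows "continuous_map T T (\<lambda>y. c \<otimes>\<^bsub>G\<^esub> y)"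
proof -
  have "continuous_map T (prod_topology T T) (\<lambda>y. (c, y))"
    using c topological_group_topspace[OF tg] by (intro continuous_map_pairedI) auto
  moreover have "continuous_map (prod_topology T T) T (\<lambda>(x, y). x \<otimes>\<^bsub>G\<^esub> y)"
    using tg by (simp add: topological_group_def)
  ultimately show ?thesis
    using continuous_map_compose by (fastforce simp: o_def)
qed

lemma openin_if_right_mult_nbhd_closed:
  assumes tg: "topological_group G T" and H: "H \<subseteq> carrier G"
    and W: "openin T W" "\<one>\<^bsub>G\<^esub> \<in> W"
    and closed: "\<And>h w. h \<in> H \<Longrightarrow> w \<in> W \<Longrightarrow> h \<otimes>\<^bsub>G\<^esub> w \<in> H"
  shows "openin T H"
proof (subst openin_subopen, intro ballI)
  interpret G: group G using topological_group_group[OF tg] .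
  fix h assume h: "h \<in> H"
  then have hc: "h \<in> carrier G" using H by auto
  let ?S = "{y \<in> topspace T. inv\<^bsub>G\<^esub> h \<otimes>\<^bsub>G\<^esub> y \<in> W}"
  have "openin T ?S"
    using openin_continuous_map_preimage[OF continuous_map_left_translation[OF tg] W(1)] hc
    by simp
  moreover have "h \<in> ?S" using hc W topological_group_topspace[OF tg] by simp
  moreover have "?S \<subseteq> H"
  proof
    fix y assume y: "y \<in> ?S"
    then have yc: "y \<in> carrier G" using topological_group_topspace[OF tg] by auto
    have "h \<otimes>\<^bsub>G\<^esub> (inv\<^bsub>G\<^esub> h \<otimes>\<^bsub>G\<^esub> y) \<in> H" using closed[OF h] y by auto
    then show "y \<in> H" using hc yc by (simp add: G.m_assoc[symmetric])
  qed
  ultimately show "\<exists>S. openin T S \<and> h \<in> S \<and> S \<subseteq> H" by blast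
qed

lemma left_ent_subset_carrier: "left_ent G A \<subseteq> carrier G \<times> carrier G"
  by (auto simp: left_ent_def)

lemma left_ent_mono: "A \<subseteq> B \<Longrightarrow> left_ent G A \<subseteq> left_ent G B"
  by (auto simp: left_ent_def)

lemma left_ent_Int: "left_ent G (A \<inter> B) = left_ent G A \<inter> left_ent G B"
  by (auto simp: left_ent_def)

lemma left_uniformity_iff:
  "U \<in> left_uniformity G T \<longleftrightarrow> U \<subseteq> carrier G \<times> carrier G \<and>
     (\<exists>W. openin T W \<and> \<one>\<^bsub>G\<^esub> \<in> W \<and> left_ent G W \<subseteq> U)"
  unfolding left_uniformity_def uniformity_generated_def by blast

lemma left_ent_in_left_uniformity:
  "openin T W \<Longrightarrow> \<one>\<^bsub>G\<^esub> \<in> W \<Longrightarrow> left_ent G W \<in> left_uniformity G T"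
  by (auto simp: left_uniformity_iff left_ent_subset_carrier)

lemma left_uniformity_Int:
  "U \<in> left_uniformity G T \<Longrightarrow> V \<in> left_uniformity G T \<Longrightarrow> U \<inter> V \<in> left_uniformity G T"
  unfolding left_uniformity_iff by (metis Int_iff Int_mono left_ent_Int le_infI1 openin_Int)

lemma left_uniformity_converse:
  assumes tg: "topological_group G T" and U: "U \<in> left_uniformity G T"
  shows "converse U \<in> left_uniformity G T"
proof -
  interpret G: group G using topological_group_group[OF tg] .
  obtain W where W: "openin T W" "\<one>\<^bsub>G\<^esub> \<in> W" "left_ent G W \<subseteq> U"
    using U by (auto simp: left_uniformity_iff)
  let ?W' = "{y \<in> topspace T. inv\<^bsub>G\<^esub> y \<in> W}"
  have "continuous_map T T (\<lambda>x. inv\<^bsub>G\<^esub> x)"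
    using tg by (simp add: topological_group_def)
  then have "openin T ?W'" using W(1) by (rule openin_continuous_map_preimage)
  moreover have "\<one>\<^bsub>G\<^esub> \<in> ?W'" using W(2) topological_group_topspace[OF tg] by simp
  moreover have "left_ent G ?W' \<subseteq> converse U"
  proof
    fix p assume "p \<in> left_ent G ?W'"
    then obtain x y where p: "p = (x, y)" "x \<in> carrier G" "y \<in> carrier G"
      "inv\<^bsub>G\<^esub> (inv\<^bsub>G\<^esub> x \<otimes>\<^bsub>G\<^esub> y) \<in> W"
      by (auto simp: left_ent_def)
    then have "(y, x) \<in> left_ent G W" by (simp add: left_ent_def G.inv_mult_group)
    then show "p \<in> converse U" using W(3) p(1) by auto
  qed
  moreover have "converse U \<subseteq> carrier G \<times> carrier G"
    using U by (auto simp: left_uniformity_iff)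
  ultimately show ?thesis unfolding left_uniformity_iff by blast
qed

lemma equiv_left_ent:
  assumes G: "group G" and A: "subgroup A G"
  shows "equiv (carrier G) (left_ent G A)"
proof (rule equivI)
  interpret G: group G by fact
  show "refl_on (carrier G) (left_ent G A)"
    by (auto simp: refl_on_def left_ent_def subgroup.one_closed[OF A])
  show "sym (left_ent G A)"
  proof (rule symI)
    fix x y assume "(x, y) \<in> left_ent G A"
    then have xy: "x \<in> carrier G" "y \<in> carrier G" "inv\<^bsub>G\<^esub> (inv\<^bsub>G\<^esub> x \<otimes>\<^bsub>G\<^esub> y) \<in> A"
      by (auto simp: left_ent_def subgroup.m_inv_closed[OF A])
    then show "(y, x) \<in> left_ent G A" by (simp add: left_ent_def G.inv_mult_group)
  qed
  show "trans (left_ent G A)"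
  proof (rule transI)
    fix x y z assume "(x, y) \<in> left_ent G A" "(y, z) \<in> left_ent G A"
    then have xyz: "x \<in> carrier G" "y \<in> carrier G" "z \<in> carrier G"
      and "(inv\<^bsub>G\<^esub> x \<otimes>\<^bsub>G\<^esub> y) \<otimes>\<^bsub>G\<^esub> (inv\<^bsub>G\<^esub> y \<otimes>\<^bsub>G\<^esub> z) \<in> A"
      by (auto simp: left_ent_def subgroup.m_closed[OF A])
    then show "(x, z) \<in> left_ent G A"
      by (simp add: left_ent_def G.m_assoc G.m_assoc[symmetric, of y])
  qed
qed (rule left_ent_subset_carrier)

subsection \<open>The open subgroup inside an equivalence entourage\<close>

definition left_core :: "('a, 'b) monoid_scheme \<Rightarrow> ('a \<times> 'a) set \<Rightarrow> 'a set" where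
  "left_core G U = {a \<in> carrier G. \<forall>x\<in>carrier G. (x, x \<otimes>\<^bsub>G\<^esub> a) \<in> U}"

lemma mem_l_coset_Image:
  assumes "group G" "U \<subseteq> carrier G \<times> carrier G" "g \<in> carrier G"
  shows "a \<in> g <#\<^bsub>G\<^esub> (U `` {inv\<^bsub>G\<^esub> g})
    \<longleftrightarrow> a \<in> carrier G \<and> (inv\<^bsub>G\<^esub> g, inv\<^bsub>G\<^esub> g \<otimes>\<^bsub>G\<^esub> a) \<in> U"
proof -
  interpret G: group G by fact
  show ?thesis
    using assms(2,3) by (force simp: l_coset_def G.m_assoc[symmetric])
qed

lemma INT_l_coset_Image_eq_left_core:
  assumes G: "group G" and U: "U \<subseteq> carrier G \<times> carrier G"
  shows "(\<Inter>g\<in>carrier G. g <#\<^bsub>G\<^esub> (U `` {inv\<^bsub>G\<^esub> g})) = left_core G U"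
proof -
  interpret G: group G by fact
  have "(\<forall>g\<in>carrier G. (inv\<^bsub>G\<^esub> g, inv\<^bsub>G\<^esub> g \<otimes>\<^bsub>G\<^esub> a) \<in> U)
      \<longleftrightarrow> (\<forall>x\<in>carrier G. (x, x \<otimes>\<^bsub>G\<^esub> a) \<in> U)" for a
    by (metis G.inv_closed G.inv_inv)
  then show ?thesis
    using mem_l_coset_Image[OF G U] by (auto simp: left_core_def dest: bspec[OF _ G.one_closed])
qed

lemma left_ent_left_core_subset:
  assumes "group G"
  shows "left_ent G (left_core G U) \<subseteq> U"
proof
  interpret G: group G by fact
  fix p assume "p \<in> left_ent G (left_core G U)"
  then obtain x y where "p = (x, y)" "x \<in> carrier G" "y \<in> carrier G"
    "(x, x \<otimes>\<^bsub>G\<^esub> (inv\<^bsub>G\<^esub> x \<otimes>\<^bsub>G\<^esub> y)) \<in> U"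
    by (auto simp: left_ent_def left_core_def)
  then show "p \<in> U" by (simp add: G.m_assoc[symmetric])
qed

lemma left_core_subgroup:
  assumes G: "group G" and U: "equiv (carrier G) U"
  shows "subgroup (left_core G U) G"
proof -
  interpret G: group G by fact
  have refl: "\<And>x. x \<in> carrier G \<Longrightarrow> (x, x) \<in> U"
    and sym: "\<And>x y. (x, y) \<in> U \<Longrightarrow> (y, x) \<in> U"
    and trans: "\<And>x y z. (x, y) \<in> U \<Longrightarrow> (y, z) \<in> U \<Longrightarrow> (x, z) \<in> U"
    using U by (auto simp: equiv_def refl_on_def sym_def elim: transE)
  show ?thesis
  proof (rule G.subgroupI)
    show "left_core G U \<subseteq> carrier G" "left_core G U \<noteq> {}"
      using refl by (auto simp: left_core_def intro!: exI[of _ "\<one>\<^bsub>G\<^esub>"])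
  next
    fix a assume a: "a \<in> left_core G U"
    have "(x, x \<otimes>\<^bsub>G\<^esub> inv\<^bsub>G\<^esub> a) \<in> U" if x: "x \<in> carrier G" for x
    proof -
      have ac: "a \<in> carrier G" using a by (simp add: left_core_def)
      have "(x \<otimes>\<^bsub>G\<^esub> inv\<^bsub>G\<^esub> a, (x \<otimes>\<^bsub>G\<^esub> inv\<^bsub>G\<^esub> a) \<otimes>\<^bsub>G\<^esub> a) \<in> U"
        using a x ac by (simp add: left_core_def)
      then show ?thesis using x ac by (simp add: G.m_assoc sym)
    qed
    then show "inv\<^bsub>G\<^esub> a \<in> left_core G U" using a by (simp add: left_core_def)
  next
    fix a b assume a: "a \<in> left_core G U" and b: "b \<in> left_core G U"
    have "(x, x \<otimes>\<^bsub>G\<^esub> (a \<otimes>\<^bsub>G\<^esub> b)) \<in> U" if "x \<in> carrier G" for x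
      using a b that by (auto simp: left_core_def G.m_assoc[symmetric] intro: trans)
    then show "a \<otimes>\<^bsub>G\<^esub> b \<in> left_core G U" using a b by (simp add: left_core_def)
  qed
qed

lemma openin_left_core:
  assumes tg: "topological_group G T" and U: "trans U"
    and W: "openin T W" "\<one>\<^bsub>G\<^esub> \<in> W" "left_ent G W \<subseteq> U"
  shows "openin T (left_core G U)"
proof (rule openin_if_right_mult_nbhd_closed[OF tg _ W(1,2)])
  interpret G: group G using topological_group_group[OF tg] .
  show "left_core G U \<subseteq> carrier G" by (auto simp: left_core_def)
  fix h w assume h: "h \<in> left_core G U" and w: "w \<in> W"
  have hc: "h \<in> carrier G" using h by (simp add: left_core_def)
  have wc: "w \<in> carrier G" using topological_group_openin_subset[OF tg W(1)] w by auto
  have "(x, x \<otimes>\<^bsub>G\<^esub> (h \<otimes>\<^bsub>G\<^esub> w)) \<in> U" if x: "x \<in> carrier G" for x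
  proof -
    have "inv\<^bsub>G\<^esub> (x \<otimes>\<^bsub>G\<^esub> h) \<otimes>\<^bsub>G\<^esub> ((x \<otimes>\<^bsub>G\<^esub> h) \<otimes>\<^bsub>G\<^esub> w) = w"
      using x hc wc by (metis G.m_closed G.l_inv G.m_assoc G.l_one G.inv_closed)
    then have "(x \<otimes>\<^bsub>G\<^esub> h, (x \<otimes>\<^bsub>G\<^esub> h) \<otimes>\<^bsub>G\<^esub> w) \<in> U"
      using W(3) x hc wc w by (auto simp: left_ent_def)
    moreover have "(x, x \<otimes>\<^bsub>G\<^esub> h) \<in> U" using h x by (simp add: left_core_def)
    ultimately have "(x, (x \<otimes>\<^bsub>G\<^esub> h) \<otimes>\<^bsub>G\<^esub> w) \<in> U" using transD[OF U] by blast
    then show ?thesis using x hc wc by (simp add: G.m_assoc)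
  qed
  then show "h \<otimes>\<^bsub>G\<^esub> w \<in> left_core G U" using hc wc by (simp add: left_core_def)
qed

lemma left_core_open_subgroup:
  assumes tg: "topological_group G T"
    and U: "U \<in> left_uniformity G T" "equiv (carrier G) U"
  shows "left_core G U \<in> open_subgroups G T"
proof -
  obtain W where "openin T W" "\<one>\<^bsub>G\<^esub> \<in> W" "left_ent G W \<subseteq> U"
    using U(1) by (auto simp: left_uniformity_iff)
  then show ?thesis
    using U(2) topological_group_group[OF tg]
    by (simp add: open_subgroups_def left_core_subgroup openin_left_core[OF tg] equiv_def)
qed

lemma equiv_left_uniformity_imp_open_subgroup_ent:
  assumes "topological_group G T" "U \<in> left_uniformity G T" "equiv (carrier G) U"
  obtains A where "A \<in> open_subgroups G T" "left_ent G A \<subseteq> U"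
  using that left_core_open_subgroup[OF assms]
    left_ent_left_core_subset[OF topological_group_group[OF assms(1)]] .

lemma left_ent_open_subgroup_in_left_uniformity:
  "A \<in> open_subgroups G T \<Longrightarrow> left_ent G A \<in> left_uniformity G T"
  by (simp add: open_subgroups_def left_ent_in_left_uniformity subgroup.one_closed)

lemma is_uniformity_base_left_ent_open_subgroups:
  assumes tg: "topological_group G T"
  shows "is_uniformity_base {left_ent G A | A. A \<in> open_subgroups G T}
           (eq_uniformity (carrier G) (left_uniformity G T))"
  unfolding is_uniformity_base_def
proof (intro conjI subsetI ballI)
  fix V assume "V \<in> {left_ent G A | A. A \<in> open_subgroups G T}"
  then obtain A where A: "A \<in> open_subgroups G T" and V: "V = left_ent G A" by blast
  have "subgroup A G" using A by (simp add: open_subgroups_def)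
  then have "V \<in> {U \<in> left_uniformity G T. equiv (carrier G) U}"
    using A V left_ent_open_subgroup_in_left_uniformity
      equiv_left_ent[OF topological_group_group[OF tg]]
    by blast
  then show "V \<in> eq_uniformity (carrier G) (left_uniformity G T)"
    unfolding eq_uniformity_def uniformity_generated_def using V left_ent_subset_carrier by blast
next
  fix U assume "U \<in> eq_uniformity (carrier G) (left_uniformity G T)"
  then obtain V where V: "V \<in> left_uniformity G T" "equiv (carrier G) V" "V \<subseteq> U"
    unfolding eq_uniformity_def uniformity_generated_def by blast
  obtain A where "A \<in> open_subgroups G T" "left_ent G A \<subseteq> V"
    by (rule equiv_left_uniformity_imp_open_subgroup_ent[OF tg V(1,2)])
  then show "\<exists>V\<in>{left_ent G A | A. A \<in> open_subgroups G T}. V \<subseteq> U"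
    using V(3) by blast
qed

subsection \<open>Zero-dimensionality\<close>

lemma subset_Image_one_if_left_ent_subset:
  assumes "group G" "A \<subseteq> carrier G" "left_ent G A \<subseteq> U"
  shows "A \<subseteq> U `` {\<one>\<^bsub>G\<^esub>}"
proof -
  interpret G: group G by fact
  show ?thesis using assms(2,3) by (force simp: left_ent_def)
qed

lemma uniformly_separated_equiv_class:
  assumes "E \<in> \<U>" "equiv X E"
  shows "uniformly_separated \<U> (E `` {x}) (X - E `` {x})"
proof -
  have "(v, y) \<notin> E" if "v \<in> E `` {x}" "y \<notin> E `` {x}" for v y
    using that assms(2) by (auto simp: equiv_def elim: transE)
  then show ?thesis unfolding uniformly_separated_def using assms(1) by blast
qed

lemma partition_in_left_uniformity:
  assumes tg: "topological_group G T"
    and sep: "uniformly_separated (left_uniformity G T) V (carrier G - V)"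
  shows "{(x, y). x \<in> carrier G \<and> y \<in> carrier G \<and> (x \<in> V \<longleftrightarrow> y \<in> V)}
           \<in> left_uniformity G T"
proof -
  obtain U where U: "U \<in> left_uniformity G T"
    and no_cross: "\<And>x y. x \<in> V \<Longrightarrow> y \<in> carrier G - V \<Longrightarrow> (x, y) \<notin> U"
    using sep by (auto simp: uniformly_separated_def)
  have "U \<inter> converse U \<in> left_uniformity G T"
    using U left_uniformity_converse[OF tg U] by (rule left_uniformity_Int)
  moreover have "U \<inter> converse U
      \<subseteq> {(x, y). x \<in> carrier G \<and> y \<in> carrier G \<and> (x \<in> V \<longleftrightarrow> y \<in> V)}"
  proof (clarify, intro conjI)
    fix x y assume xy: "(x, y) \<in> U" "(y, x) \<in> U"
    then show "x \<in> carrier G" "y \<in> carrier G" using U by (auto simp: left_uniformity_iff)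
    then show "x \<in> V \<longleftrightarrow> y \<in> V" using xy no_cross by blast
  qed
  ultimately show ?thesis
    unfolding left_uniformity_iff by blast
qed

lemma uniformly_zero_dim_if_open_subgroups_local_base:
  assumes tg: "topological_group G T" and lb: "open_subgroups_local_base G T"
  shows "uniformly_zero_dim (carrier G) (left_uniformity G T)"
  unfolding uniformly_zero_dim_def is_uniformity_base_def
proof (intro conjI ballI)
  fix U assume "U \<in> left_uniformity G T"
  then obtain W where W: "openin T W" "\<one>\<^bsub>G\<^esub> \<in> W" "left_ent G W \<subseteq> U"
    unfolding left_uniformity_iff by blast
  then obtain A where A: "A \<in> open_subgroups G T" "A \<subseteq> W"
    using lb unfolding open_subgroups_local_base_def by blast
  then have "left_ent G A \<in> {U \<in> left_uniformity G T. equiv (carrier G) U}"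
    using left_ent_open_subgroup_in_left_uniformity equiv_left_ent topological_group_group[OF tg]
    by (auto simp: open_subgroups_def)
  moreover have "left_ent G A \<subseteq> U" using left_ent_mono[OF A(2)] W(3) by blast
  ultimately show "\<exists>V\<in>{U \<in> left_uniformity G T. equiv (carrier G) U}. V \<subseteq> U" by blast
qed auto

lemma open_subgroups_local_base_if_uniformly_zero_dim:
  assumes tg: "topological_group G T"
    and uzd: "uniformly_zero_dim (carrier G) (left_uniformity G T)"
  shows "open_subgroups_local_base G T"
  unfolding open_subgroups_local_base_def
proof (intro allI impI)
  fix W assume W: "openin T W \<and> \<one>\<^bsub>G\<^esub> \<in> W"
  then obtain V where V: "V \<in> left_uniformity G T" "equiv (carrier G) V" "V \<subseteq> left_ent G W"
    using uzd left_ent_in_left_uniformity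
    unfolding uniformly_zero_dim_def is_uniformity_base_def by blast
  obtain A where A: "A \<in> open_subgroups G T" "left_ent G A \<subseteq> V"
    by (rule equiv_left_uniformity_imp_open_subgroup_ent[OF tg V(1,2)])
  have "A \<subseteq> left_ent G W `` {\<one>\<^bsub>G\<^esub>}"
    using A V(3) topological_group_group[OF tg]
    by (intro subset_Image_one_if_left_ent_subset) (auto simp: open_subgroups_def subgroup.subset)
  also have "\<dots> \<subseteq> W"
    using monoid.inv_one group.is_monoid monoid.l_one topological_group_group[OF tg]
    by (fastforce simp: left_ent_def)
  finally show "\<exists>A\<in>open_subgroups G T. A \<subseteq> W" using A(1) by blast
qed

lemma strongly_zero_dim_if_open_subgroups_local_base:
  assumes tg: "topological_group G T" and lb: "open_subgroups_local_base G T"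
  shows "strongly_zero_dim T (left_uniformity G T)"
  unfolding strongly_zero_dim_def strongly_zero_dim_at_def
proof (intro ballI allI impI)
  interpret G: group G using topological_group_group[OF tg] .
  note top = topological_group_topspace[OF tg]
  fix x W assume "x \<in> topspace T" and W: "openin T W \<and> x \<in> W"
  then have xc: "x \<in> carrier G" using top by simp
  let ?W' = "{y \<in> topspace T. x \<otimes>\<^bsub>G\<^esub> y \<in> W}"
  have "openin T ?W'"
    using W openin_continuous_map_preimage[OF continuous_map_left_translation[OF tg xc]] by blast
  moreover have "\<one>\<^bsub>G\<^esub> \<in> ?W'" using W xc top by simp
  ultimately obtain A where A: "A \<in> open_subgroups G T" "A \<subseteq> ?W'"
    using lb unfolding open_subgroups_local_base_def by blast
  have E: "left_ent G A \<in> left_uniformity G T" "equiv (carrier G) (left_ent G A)"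
    using A(1) left_ent_open_subgroup_in_left_uniformity equiv_left_ent[OF G.group_axioms]
    by (auto simp: open_subgroups_def)
  let ?V = "left_ent G A `` {x}"
  have "?V \<subseteq> W"
  proof
    fix y assume "y \<in> ?V"
    then have "y \<in> carrier G" "inv\<^bsub>G\<^esub> x \<otimes>\<^bsub>G\<^esub> y \<in> ?W'" using A(2) by (auto simp: left_ent_def)
    then show "y \<in> W" using xc by (simp add: G.m_assoc[symmetric])
  qed
  moreover have "x \<in> ?V" using E(2) xc by (auto simp: equiv_def refl_on_def)
  moreover have "uniformly_separated (left_uniformity G T) ?V (topspace T - ?V)"
    using uniformly_separated_equiv_class[OF E] top by simp
  ultimately show "\<exists>V\<subseteq>W. x \<in> V \<and> uniformly_separated (left_uniformity G T) V (topspace T - V)"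
    by blast
qed

lemma open_subgroups_local_base_if_strongly_zero_dim_at_one:
  assumes tg: "topological_group G T"
    and szd: "strongly_zero_dim_at T (left_uniformity G T) \<one>\<^bsub>G\<^esub>"
  shows "open_subgroups_local_base G T"
  unfolding open_subgroups_local_base_def
proof (intro allI impI)
  fix W assume "openin T W \<and> \<one>\<^bsub>G\<^esub> \<in> W"
  then obtain V where V: "V \<subseteq> W" "\<one>\<^bsub>G\<^esub> \<in> V"
    and sep: "uniformly_separated (left_uniformity G T) V (carrier G - V)"
    using szd topological_group_topspace[OF tg] unfolding strongly_zero_dim_at_def by metis
  define P where "P = {(x, y). x \<in> carrier G \<and> y \<in> carrier G \<and> (x \<in> V \<longleftrightarrow> y \<in> V)}"
  have "P \<in> left_uniformity G T" unfolding P_def by (rule partition_in_left_uniformity[OF tg sep])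
  moreover have "equiv (carrier G) P" by (auto simp: P_def equiv_def refl_on_def sym_def trans_def)
  ultimately obtain A where A: "A \<in> open_subgroups G T" "left_ent G A \<subseteq> P"
    using equiv_left_uniformity_imp_open_subgroup_ent[OF tg] by blast
  have "A \<subseteq> P `` {\<one>\<^bsub>G\<^esub>}"
    using A topological_group_group[OF tg]
    by (intro subset_Image_one_if_left_ent_subset) (auto simp: open_subgroups_def subgroup.subset)
  also have "\<dots> \<subseteq> W" using V by (auto simp: P_def)
  finally show "\<exists>A\<in>open_subgroups G T. A \<subseteq> W" using A(1) by blast
qed

lemma left_uniformity_zero_dim_characterisation:
  assumes tg: "topological_group G T"
  shows
   "(\<forall>U \<in> left_uniformity G T. equiv (carrier G) U \<longrightarrow>
       (let A = (\<Inter>g\<in>carrier G. g <#\<^bsub>G\<^esub> (U `` {inv\<^bsub>G\<^esub> g}))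
        in A \<in> open_subgroups G T \<and> left_ent G A \<subseteq> U))
    \<and> is_uniformity_base {left_ent G A | A. A \<in> open_subgroups G T}
        (eq_uniformity (carrier G) (left_uniformity G T))
    \<and> (uniformly_zero_dim (carrier G) (left_uniformity G T)
         \<longleftrightarrow> strongly_zero_dim_at T (left_uniformity G T) \<one>\<^bsub>G\<^esub>)
    \<and> (strongly_zero_dim_at T (left_uniformity G T) \<one>\<^bsub>G\<^esub>
         \<longleftrightarrow> strongly_zero_dim T (left_uniformity G T))
    \<and> (strongly_zero_dim T (left_uniformity G T) \<longleftrightarrow> open_subgroups_local_base G T)"
proof (intro conjI ballI impI)
  note G = topological_group_group[OF tg]
  fix U assume "U \<in> left_uniformity G T" "equiv (carrier G) U"
  then show "let A = (\<Inter>g\<in>carrier G. g <#\<^bsub>G\<^esub> (U `` {inv\<^bsub>G\<^esub> g}))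
      in A \<in> open_subgroups G T \<and> left_ent G A \<subseteq> U"
    using INT_l_coset_Image_eq_left_core[OF G equiv_type] left_core_open_subgroup[OF tg]
      left_ent_left_core_subset[OF G]
    by (simp add: Let_def)
next
  have szd_at_one: "strongly_zero_dim T (left_uniformity G T) \<Longrightarrow>
      strongly_zero_dim_at T (left_uniformity G T) \<one>\<^bsub>G\<^esub>"
    using topological_group_group[OF tg] group.is_monoid monoid.one_closed
      topological_group_topspace[OF tg]
    by (fastforce simp: strongly_zero_dim_def)
  note to_local_base = open_subgroups_local_base_if_uniformly_zero_dim[OF tg]
    open_subgroups_local_base_if_strongly_zero_dim_at_one[OF tg]
  note from_local_base = uniformly_zero_dim_if_open_subgroups_local_base[OF tg]
    strongly_zero_dim_if_open_subgroups_local_base[OF tg]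
  show "uniformly_zero_dim (carrier G) (left_uniformity G T)
      \<longleftrightarrow> strongly_zero_dim_at T (left_uniformity G T) \<one>\<^bsub>G\<^esub>"
    "strongly_zero_dim_at T (left_uniformity G T) \<one>\<^bsub>G\<^esub>
      \<longleftrightarrow> strongly_zero_dim T (left_uniformity G T)"
    "strongly_zero_dim T (left_uniformity G T) \<longleftrightarrow> open_subgroups_local_base G T"
    using szd_at_one to_local_base from_local_base by blast+
qed (rule is_uniformity_base_left_ent_open_subgroups[OF tg])

subsection \<open>The opposite group\<close>

definition opposite_group :: "('a, 'b) monoid_scheme \<Rightarrow> 'a monoid" where
  "opposite_group G = \<lparr>carrier = carrier G, mult = (\<lambda>x y. y \<otimes>\<^bsub>G\<^esub> x), one = \<one>\<^bsub>G\<^esub>\<rparr>"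

lemma opposite_group_simps [simp]:
  "carrier (opposite_group G) = carrier G"
  "x \<otimes>\<^bsub>opposite_group G\<^esub> y = y \<otimes>\<^bsub>G\<^esub> x"
  "\<one>\<^bsub>opposite_group G\<^esub> = \<one>\<^bsub>G\<^esub>"
  by (simp_all add: opposite_group_def)

lemma group_opposite_group: "group G \<Longrightarrow> group (opposite_group G)"
proof -
  assume "group G"
  then interpret G: group G .
  show ?thesis
    by (rule groupI) (auto simp: G.m_assoc intro: bexI[of _ "inv\<^bsub>G\<^esub> x" for x])
qed

lemma inv_opposite_group:
  assumes "group G" "x \<in> carrier G"
  shows "inv\<^bsub>opposite_group G\<^esub> x = inv\<^bsub>G\<^esub> x"
proof -
  interpret G: group G by fact
  interpret O: group "opposite_group G" using group_opposite_group[OF assms(1)] .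
  show ?thesis using assms(2) by (intro O.inv_equality) auto
qed

lemma topological_group_opposite_group:
  assumes tg: "topological_group G T"
  shows "topological_group (opposite_group G) T"
proof -
  have G: "group G" and top: "topspace T = carrier G"
    and mult: "continuous_map (prod_topology T T) T (\<lambda>(x, y). x \<otimes>\<^bsub>G\<^esub> y)"
    and inv: "continuous_map T T (\<lambda>x. inv\<^bsub>G\<^esub> x)"
    using tg by (auto simp: topological_group_def)
  have "continuous_map (prod_topology T T) (prod_topology T T) (\<lambda>p. (snd p, fst p))"
    by (intro continuous_map_pairedI continuous_map_fst continuous_map_snd)
  from continuous_map_compose[OF this mult]
  have "continuous_map (prod_topology T T) T (\<lambda>(x, y). x \<otimes>\<^bsub>opposite_group G\<^esub> y)"
    by (simp add: o_def case_prod_unfold)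
  moreover have "continuous_map T T (\<lambda>x. inv\<^bsub>opposite_group G\<^esub> x)"
    using inv by (rule continuous_map_eq) (simp add: inv_opposite_group[OF G] top)
  ultimately show ?thesis
    using group_opposite_group[OF G] top by (simp add: topological_group_def)
qed

lemma right_ent_eq_left_ent_opposite_group:
  "group G \<Longrightarrow> right_ent G A = left_ent (opposite_group G) A"
  by (auto simp: left_ent_def right_ent_def inv_opposite_group)

lemma right_uniformity_eq_left_uniformity_opposite_group:
  "group G \<Longrightarrow> right_uniformity G T = left_uniformity (opposite_group G) T"
  by (simp add: left_uniformity_def right_uniformity_def right_ent_eq_left_ent_opposite_group)

lemma subgroup_opposite_group_iff:
  assumes "group G"
  shows "subgroup A (opposite_group G) \<longleftrightarrow> subgroup A G"
proof (cases "A \<subseteq> carrier G")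
  case True
  then have "\<And>x. x \<in> A \<Longrightarrow> inv\<^bsub>opposite_group G\<^esub> x = inv\<^bsub>G\<^esub> x"
    using inv_opposite_group[OF assms] by blast
  then show ?thesis using True by (auto simp: subgroup_def)
qed (auto simp: subgroup_def)

lemma open_subgroups_opposite_group:
  "group G \<Longrightarrow> open_subgroups (opposite_group G) T = open_subgroups G T"
  by (simp add: open_subgroups_def subgroup_opposite_group_iff)

lemma open_subgroups_local_base_opposite_group:
  "group G \<Longrightarrow> open_subgroups_local_base (opposite_group G) T = open_subgroups_local_base G T"
  by (simp add: open_subgroups_local_base_def open_subgroups_opposite_group)

lemma INT_r_coset_eq_INT_l_coset_opposite_group:
  assumes "group G"
  shows "(\<Inter>g\<in>carrier G. (U `` {inv\<^bsub>G\<^esub> g}) #>\<^bsub>G\<^esub> g)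
       = (\<Inter>g\<in>carrier G. g <#\<^bsub>opposite_group G\<^esub> (U `` {inv\<^bsub>opposite_group G\<^esub> g}))"
  using assms by (simp add: inv_opposite_group l_coset_def r_coset_def)

theorem mainTheorem15:
  fixes G :: "('a, 'b) monoid_scheme" and T :: "'a topology"
  assumes "topological_group G T"
  shows
   "(\<forall>U \<in> left_uniformity G T. equiv (carrier G) U \<longrightarrow>
       (let A = (\<Inter>g\<in>carrier G. g <#\<^bsub>G\<^esub> (U `` {inv\<^bsub>G\<^esub> g}))
        in A \<in> open_subgroups G T \<and> left_ent G A \<subseteq> U))
    \<and> is_uniformity_base {left_ent G A | A. A \<in> open_subgroups G T}
        (eq_uniformity (carrier G) (left_uniformity G T))
    \<and> (uniformly_zero_dim (carrier G) (left_uniformity G T)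
         \<longleftrightarrow> strongly_zero_dim_at T (left_uniformity G T) \<one>\<^bsub>G\<^esub>)
    \<and> (strongly_zero_dim_at T (left_uniformity G T) \<one>\<^bsub>G\<^esub>
         \<longleftrightarrow> strongly_zero_dim T (left_uniformity G T))
    \<and> (strongly_zero_dim T (left_uniformity G T) \<longleftrightarrow> open_subgroups_local_base G T)
    \<and> (\<forall>U \<in> right_uniformity G T. equiv (carrier G) U \<longrightarrow>
       (let A = (\<Inter>g\<in>carrier G. (U `` {inv\<^bsub>G\<^esub> g}) #>\<^bsub>G\<^esub> g)
        in A \<in> open_subgroups G T \<and> right_ent G A \<subseteq> U))
    \<and> is_uniformity_base {right_ent G A | A. A \<in> open_subgroups G T}
        (eq_uniformity (carrier G) (right_uniformity G T))
    \<and> (uniformly_zero_dim (carrier G) (right_uniformity G T)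
         \<longleftrightarrow> strongly_zero_dim_at T (right_uniformity G T) \<one>\<^bsub>G\<^esub>)
    \<and> (strongly_zero_dim_at T (right_uniformity G T) \<one>\<^bsub>G\<^esub>
         \<longleftrightarrow> strongly_zero_dim T (right_uniformity G T))
    \<and> (strongly_zero_dim T (right_uniformity G T) \<longleftrightarrow> open_subgroups_local_base G T)"
proof -
  have G: "group G" using topological_group_group[OF assms] .
  note left = left_uniformity_zero_dim_characterisation
  show ?thesis
    using left[OF assms] left[OF topological_group_opposite_group[OF assms]]
    by (simp only: opposite_group_simps INT_r_coset_eq_INT_l_coset_opposite_group[OF G]
        right_ent_eq_left_ent_opposite_group[OF G] right_uniformity_eq_left_uniformity_opposite_group[OF G]
        open_subgroups_opposite_group[OF G] open_subgroups_local_base_opposite_group[OF G])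
      blast
qed

end
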